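(* Let $ABC$ be a triangle with circumcircle $(ABC)$, and let $P, P'$ be isogonal conjugates with respect to $ABC$. Let $D$ be the intersection of $(ABC)$ with the conic $(ABCPP')$ other than $A,B,C$, and let $D'$ be the point of $(ABC)$ such that $DD' \parallel PP'$. Then the following are equivalent: (i) either line $PP'$ is tangent to the conic $(ABCD'P)$, or line $PP'$ passes through the center of the conic $(ABCD'P)$; (ii) $P$ lies on either the major axis or the minor axis of the conic $(ABCD'P)$.
   Context: For five points $V,W,X,Y,Z$, $(VWXYZ)$ denotes the conic through them; $(ABC)$ denotes the circumcircle of $ABC$. *)

theory Defs
  imports Complex_Main
begin

(* Points of the Euclidean plane are complex numbers (x = Re z, y = Im z). *)

definition collinear3 :: "complex \<Rightarrow> complex \<Rightarrow> complex \<Rightarrow> bool" where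
  "collinear3 X Y Z \<longleftrightarrow> Im ((Y - X) * cnj (Z - X)) = 0"

definition reflect_across :: "complex \<Rightarrow> complex \<Rightarrow> complex \<Rightarrow> complex" where
  "reflect_across L1 L2 X = L1 + ((L2 - L1) / cnj (L2 - L1)) * cnj (X - L1)"

definition bisector_point :: "complex \<Rightarrow> complex \<Rightarrow> complex \<Rightarrow> complex" where
  "bisector_point A B C = A + (B - A) / of_real (cmod (B - A)) + (C - A) / of_real (cmod (C - A))"

definition isogonal_at :: "complex \<Rightarrow> complex \<Rightarrow> complex \<Rightarrow> complex \<Rightarrow> complex \<Rightarrow> bool" where
  "isogonal_at A B C P P' \<longleftrightarrow> collinear3 A (reflect_across A (bisector_point A B C) P) P'"

definition off_sidelines :: "complex \<Rightarrow> complex \<Rightarrow> complex \<Rightarrow> complex \<Rightarrow> bool" where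
  "off_sidelines A B C P \<longleftrightarrow> \<not> collinear3 B C P \<and> \<not> collinear3 C A P \<and> \<not> collinear3 A B P"

definition isogonal_conjugates :: "complex \<Rightarrow> complex \<Rightarrow> complex \<Rightarrow> complex \<Rightarrow> complex \<Rightarrow> bool" where
  "isogonal_conjugates A B C P P' \<longleftrightarrow>
     off_sidelines A B C P \<and> off_sidelines A B C P' \<and>
     isogonal_at A B C P P' \<and> isogonal_at B C A P P' \<and> isogonal_at C A B P P'"

(* conic  a x^2 + b x y + c y^2 + d x + e y + f = 0, given by its coefficients (a,b,c,d,e,f) *)
type_synonym conic = "real \<times> real \<times> real \<times> real \<times> real \<times> real"

definition conic_eval :: "conic \<Rightarrow> complex \<Rightarrow> real" where
  "conic_eval q z = (case q of (a, b, c, d, e, f) \<Rightarrow>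
      a * (Re z)^2 + b * Re z * Im z + c * (Im z)^2 + d * Re z + e * Im z + f)"

definition conic_scale :: "real \<Rightarrow> conic \<Rightarrow> conic" where
  "conic_scale k q = (case q of (a, b, c, d, e, f) \<Rightarrow> (k*a, k*b, k*c, k*d, k*e, k*f))"

definition conic_through :: "conic \<Rightarrow> complex set \<Rightarrow> bool" where
  "conic_through q S \<longleftrightarrow> q \<noteq> (0, 0, 0, 0, 0, 0) \<and> (\<forall>z\<in>S. conic_eval q z = 0)"

definition is_the_conic :: "conic \<Rightarrow> complex set \<Rightarrow> bool" where
  "is_the_conic q S \<longleftrightarrow> conic_through q S \<and> (\<forall>q'. conic_through q' S \<longrightarrow> (\<exists>k. q' = conic_scale k q))"

definition conic_nondegenerate :: "conic \<Rightarrow> bool" where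
  "conic_nondegenerate q = (case q of (a, b, c, d, e, f) \<Rightarrow>
      a * (c * f - (e/2)^2) - (b/2) * ((b/2) * f - (e/2) * (d/2)) + (d/2) * ((b/2) * (e/2) - c * (d/2)) \<noteq> 0)"

definition conic_central :: "conic \<Rightarrow> bool" where
  "conic_central q = (case q of (a, b, c, d, e, f) \<Rightarrow> 4 * a * c - b^2 \<noteq> 0)"

definition is_center :: "conic \<Rightarrow> complex \<Rightarrow> bool" where
  "is_center q z = (case q of (a, b, c, d, e, f) \<Rightarrow>
      2*a * Re z + b * Im z + d = 0 \<and> b * Re z + 2*c * Im z + e = 0)"

(* w is an eigenvector of the matrix [[a, b/2], [b/2, c]] of the quadratic part *)
definition principal_direction :: "conic \<Rightarrow> complex \<Rightarrow> bool" where
  "principal_direction q w = (case q of (a, b, c, d, e, f) \<Rightarrow>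
      w \<noteq> 0 \<and> (\<exists>k. a * Re w + (b/2) * Im w = k * Re w \<and> (b/2) * Re w + c * Im w = k * Im w))"

(* the axes of a central conic: lines through the center along the principal directions *)
definition on_major_or_minor_axis :: "conic \<Rightarrow> complex \<Rightarrow> bool" where
  "on_major_or_minor_axis q X \<longleftrightarrow> (\<exists>z. is_center q z \<and> (X = z \<or> principal_direction q (X - z)))"

(* the line XY meets the conic in a double point *)
definition tangent_line :: "conic \<Rightarrow> complex \<Rightarrow> complex \<Rightarrow> bool" where
  "tangent_line q X Y \<longleftrightarrow> X \<noteq> Y \<and>
     (\<exists>\<alpha> \<beta> \<gamma>. \<alpha> \<noteq> 0 \<and> (\<forall>t::real. conic_eval q (X + of_real t * (Y - X)) = \<alpha> * t^2 + \<beta> * t + \<gamma>)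
        \<and> \<beta>^2 = 4 * \<alpha> * \<gamma>)"

definition line_through_center :: "conic \<Rightarrow> complex \<Rightarrow> complex \<Rightarrow> bool" where
  "line_through_center q X Y \<longleftrightarrow> (\<exists>z. is_center q z \<and> collinear3 X Y z)"

end

theory Submission
  imports Defs
begin

text \<open>Translate the circumcircle to \<open>\<bar>x\<bar> = r\<close> and let \<open>\<kappa> = ((a - c) - i b) / 2\<close> encode the quadratic
  part of a conic, so that \<open>u\<close> is an axis direction iff \<open>\<kappa> u\<^sup>2\<close> is real. Restricted to the circle, a
  conic becomes a quartic in \<open>x\<close> with leading coefficient \<open>\<kappa>\<close> and constant coefficient \<open>cnj \<kappa> r\<^sup>4\<close>,
  so a conic through four concyclic points satisfies \<open>cnj \<kappa> r\<^sup>4 = \<kappa> x\<^sub>1 x\<^sub>2 x\<^sub>3 x\<^sub>4\<close>.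

  In line-form (trilinear) coordinates, the conic \<open>(ABCPP')\<close> meets the circle again at the point \<open>D\<close>
  for which \<open>CD\<close> is isogonal to the direction \<open>w = P' - P\<close>, i.e. \<open>r\<^sup>2 d w = - a b c cnj w\<close>; and
  \<open>DD' \<parallel> w\<close> means \<open>d d' cnj w = - r\<^sup>2 w\<close>. With the four-point relation for \<open>(ABCD'P)\<close> this makes
  \<open>\<kappa> w\<^sup>2\<close> real: \<open>PP'\<close> is parallel to an axis of \<open>(ABCD'P)\<close> (and \<open>\<kappa> \<noteq> 0\<close>, as \<open>P\<close> is not on the
  circumcircle). For a line through a point \<open>P\<close> of a central conic parallel to an axis, tangency
  means \<open>P - z\<^sub>0 \<perp> w\<close> and passing through the centre \<open>z\<^sub>0\<close> means \<open>P - z\<^sub>0 \<parallel> w\<close>, and \<open>P\<close> lies on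
  an axis iff one of the two holds.\<close>

lemma mult_cnj_eq_if_cmod_eq: "cmod z = r \<Longrightarrow> z * cnj z = of_real (r^2)"
  using complex_norm_square[of z] by simp

lemma collinear3_translate: "collinear3 (X - Oc) (Y - Oc) (Z - Oc) \<longleftrightarrow> collinear3 X Y Z"
  unfolding collinear3_def by simp

lemma not_collinear3_rotate:
  assumes "\<not> collinear3 A B C" shows "\<not> collinear3 B C A" "\<not> collinear3 C A B"
  using assms unfolding collinear3_def by (simp_all add: algebra_simps)

lemma not_collinear3_imp_distinct:
  "\<not> collinear3 A B C \<Longrightarrow> A \<noteq> B \<and> B \<noteq> C \<and> C \<noteq> A"
  unfolding collinear3_def by (auto simp: algebra_simps)

lemma Im_mult_cnj_eq_0_trans:
  assumes "Im (w * cnj u) = 0" "Im (w * cnj v) = 0" "w \<noteq> 0"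
  shows "Im (u * cnj v) = 0"
proof -
  have h: "Im w * Re u - Re w * Im u = 0" "Im w * Re v - Re w * Im v = 0"
    using assms(1,2) by (simp_all add: algebra_simps)
  have "(Im u * Re v - Re u * Im v) * Re w = 0" "(Im u * Re v - Re u * Im v) * Im w = 0"
    using h by algebra+
  then have "Im u * Re v - Re u * Im v = 0" using assms(3) by (auto simp: complex_eq_iff)
  then show ?thesis by (simp add: algebra_simps)
qed

lemma Im_eq_0_imp_eq_cnj: "Im z = 0 \<Longrightarrow> z = cnj z"
  by (simp add: complex_eq_iff)

lemma Im_square_eq_0_iff: "Im (z^2) = 0 \<longleftrightarrow> Re z = 0 \<or> Im z = 0"
  by (auto simp: power2_eq_square)

subsection \<open>Line forms\<close>

text \<open>\<open>line_form U V X\<close> is \<open>\<bar>V - U\<bar>\<close> times the signed distance from \<open>X\<close> to the line \<open>UV\<close>;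
  for the sides of a triangle these are (rescaled) trilinear coordinates.\<close>

definition line_form :: "complex \<Rightarrow> complex \<Rightarrow> complex \<Rightarrow> real" where
  "line_form U V X = Im ((X - U) * cnj (V - U))"

lemma collinear3_iff_line_form: "collinear3 U X V \<longleftrightarrow> line_form U V X = 0"
  unfolding collinear3_def line_form_def ..

lemma line_form_swap: "line_form V U X = - line_form U V X"
  unfolding line_form_def by (simp add: algebra_simps)

lemma line_form_left [simp]: "line_form U V U = 0"
  unfolding line_form_def by simp

lemma line_form_right [simp]: "line_form U V V = 0"
  unfolding line_form_def by (simp add: algebra_simps)

lemma line_form_affine:
  "line_form U V X = - Im (V - U) * Re X + Re (V - U) * Im X - Im (U * cnj (V - U))"
  unfolding line_form_def by (simp add: algebra_simps)

lemma line_form_sum: "line_form B C X + line_form C A X + line_form A B X = line_form A B C"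
  unfolding line_form_def by (simp add: algebra_simps)

lemma line_form_nonzero: "\<not> collinear3 A B C \<Longrightarrow> line_form A B C \<noteq> 0"
  unfolding line_form_def collinear3_def by (simp add: algebra_simps)

lemma line_forms_at_reflected_vertex:
  assumes "\<not> collinear3 A B C"
  shows "line_form A B (2*B - A) = 0" "line_form B C (2*B - A) \<noteq> 0" "line_form C A (2*B - A) \<noteq> 0"
proof -
  define t where "t = Im ((B - A) * cnj (C - A))"
  have "t \<noteq> 0" using assms unfolding collinear3_def t_def .
  moreover have "line_form B C (2*B - A) = t" "line_form C A (2*B - A) = - 2 * t"
    unfolding line_form_def t_def by (simp_all add: algebra_simps)
  ultimately show "line_form B C (2*B - A) \<noteq> 0" "line_form C A (2*B - A) \<noteq> 0" by simp_all
  show "line_form A B (2*B - A) = 0" unfolding line_form_def by (simp add: algebra_simps)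
qed

subsection \<open>Isogonality\<close>

lemma unit_sum_div_cnj:
  assumes "cmod u1 = 1" "cmod u2 = 1" "u1 + u2 \<noteq> 0"
  shows "(u1 + u2) / cnj (u1 + u2) = u1 * u2"
proof -
  have "u1 \<noteq> 0" "u2 \<noteq> 0" using assms(1,2) by auto
  moreover have "u1 * cnj u1 = 1" "u2 * cnj u2 = 1" using assms(1,2) mult_cnj_eq_if_cmod_eq by auto
  ultimately have "cnj u1 = 1 / u1" "cnj u2 = 1 / u2" by (simp_all add: eq_divide_eq mult.commute)
  then have "cnj (u1 + u2) = (u1 + u2) / (u1 * u2)" using \<open>u1 \<noteq> 0\<close> \<open>u2 \<noteq> 0\<close> by (simp add: field_simps)
  then show ?thesis using assms by auto
qed

text \<open>With \<open>u\<^sub>1, u\<^sub>2\<close> the unit vectors along \<open>AB\<close> and \<open>AC\<close>, reflection in the bisector at \<open>A\<close> is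
  \<open>z \<mapsto> A + u\<^sub>1 u\<^sub>2 cnj (z - A)\<close>.\<close>

lemma isogonal_at_iff:
  assumes tri: "\<not> collinear3 A B C"
  shows "isogonal_at A B C P P' \<longleftrightarrow> Im ((B - A) * (C - A) * cnj ((P - A) * (P' - A))) = 0"
proof -
  define nb where "nb = cmod (B - A)"
  define nc where "nc = cmod (C - A)"
  have nb: "nb > 0" and nc: "nc > 0"
    using not_collinear3_imp_distinct[OF tri] unfolding nb_def nc_def by auto
  define u1 where "u1 = (B - A) / of_real nb"
  define u2 where "u2 = (C - A) / of_real nc"
  have u1: "cmod u1 = 1" and u2: "cmod u2 = 1"
    using nb nc unfolding u1_def u2_def nb_def nc_def by (simp_all add: norm_divide)
  have bisector: "bisector_point A B C - A = u1 + u2"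
    unfolding bisector_point_def u1_def u2_def nb_def nc_def by simp
  have "u1 + u2 \<noteq> 0"
  proof
    assume "u1 + u2 = 0"
    then have "C - A = - of_real (nc / nb) * (B - A)"
      using nb nc unfolding u1_def u2_def by (simp add: field_simps)
    then have "collinear3 A B C" unfolding collinear3_def by simp (simp add: algebra_simps)
    then show False using tri by simp
  qed
  then have "(u1 + u2) / cnj (u1 + u2) = of_real (1 / (nb * nc)) * ((B - A) * (C - A))"
    using unit_sum_div_cnj[OF u1 u2] nb nc unfolding u1_def u2_def by (simp add: field_simps)
  then have "(reflect_across A (bisector_point A B C) P - A) * cnj (P' - A)
      = of_real (1 / (nb * nc)) * ((B - A) * (C - A) * cnj ((P - A) * (P' - A)))"
    unfolding reflect_across_def bisector by (simp add: mult.assoc)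
  moreover have "isogonal_at A B C P P'
      \<longleftrightarrow> Im ((reflect_across A (bisector_point A B C) P - A) * cnj (P' - A)) = 0"
    unfolding isogonal_at_def collinear3_def ..
  ultimately show ?thesis using nb nc by simp
qed

lemma isogonal_at_iff_line_forms:
  assumes "\<not> collinear3 A B C"
  shows "isogonal_at A B C X Y \<longleftrightarrow>
    line_form A B X * line_form A B Y * (cmod (C - A))^2 = line_form A C X * line_form A C Y * (cmod (B - A))^2"
proof -
  have "line_form A B X * line_form A B Y * (cmod (C - A))^2 - line_form A C X * line_form A C Y * (cmod (B - A))^2
      = - Im (cnj (B - A) * (C - A)) * Im ((B - A) * (C - A) * cnj ((X - A) * (Y - A)))"
    unfolding line_form_def cmod_power2 by (simp add: power2_eq_square) algebra
  moreover have "Im (cnj (B - A) * (C - A)) \<noteq> 0"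
    using assms unfolding collinear3_def by (simp add: algebra_simps)
  ultimately show ?thesis unfolding isogonal_at_iff[OF assms] by auto
qed

text \<open>The trilinear equation \<open>a \<beta> \<gamma> + b \<gamma> \<alpha> + c \<alpha> \<beta> = 0\<close> of the circumcircle; each line form
  carries an extra factor of its side length.\<close>

lemma circumcircle_line_form_identity:
  assumes "cmod (B - Oc) = cmod (A - Oc)" "cmod (C - Oc) = cmod (A - Oc)" "cmod (X - Oc) = cmod (A - Oc)"
  shows "(cmod (C - B))^2 * (line_form C A X * line_form A B X) + (cmod (A - C))^2 * (line_form A B X * line_form B C X)
    + (cmod (B - A))^2 * (line_form B C X * line_form C A X) = 0"
proof -
  have "(cmod (B - Oc))^2 = (cmod (A - Oc))^2" "(cmod (C - Oc))^2 = (cmod (A - Oc))^2"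
    "(cmod (X - Oc))^2 = (cmod (A - Oc))^2" using assms by simp_all
  then show ?thesis unfolding line_form_def cmod_power2 by (simp add: power2_eq_square) algebra
qed

subsection \<open>Conics built from lines\<close>

definition conic_add :: "conic \<Rightarrow> conic \<Rightarrow> conic" where
  "conic_add q q' = (case q of (a, b, c, d, e, f) \<Rightarrow> case q' of (a', b', c', d', e', f') \<Rightarrow>
     (a + a', b + b', c + c', d + d', e + e', f + f'))"

lemma conic_eval_add: "conic_eval (conic_add q q') z = conic_eval q z + conic_eval q' z"
  unfolding conic_add_def conic_eval_def by (simp split: prod.splits add: algebra_simps)

lemma conic_eval_scale: "conic_eval (conic_scale k q) z = k * conic_eval q z"
  unfolding conic_scale_def conic_eval_def by (simp split: prod.splits add: algebra_simps)

lemma conic_eval_zero: "conic_eval (0, 0, 0, 0, 0, 0) z = 0"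
  unfolding conic_eval_def by simp

definition affine_product :: "real \<Rightarrow> real \<Rightarrow> real \<Rightarrow> real \<Rightarrow> real \<Rightarrow> real \<Rightarrow> conic" where
  "affine_product p1 q1 r1 p2 q2 r2 = (p1*p2, p1*q2 + q1*p2, q1*q2, p1*r2 + r1*p2, q1*r2 + r1*q2, r1*r2)"

lemma conic_eval_affine_product:
  "conic_eval (affine_product p1 q1 r1 p2 q2 r2) z = (p1 * Re z + q1 * Im z + r1) * (p2 * Re z + q2 * Im z + r2)"
  unfolding affine_product_def conic_eval_def by (simp add: power2_eq_square algebra_simps)

definition line_pair :: "complex \<Rightarrow> complex \<Rightarrow> complex \<Rightarrow> complex \<Rightarrow> conic" where
  "line_pair U V W Z = affine_product
     (- Im (V - U)) (Re (V - U)) (- Im (U * cnj (V - U))) (- Im (Z - W)) (Re (Z - W)) (- Im (W * cnj (Z - W)))"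

lemma conic_eval_line_pair: "conic_eval (line_pair U V W Z) X = line_form U V X * line_form W Z X"
  unfolding line_pair_def conic_eval_affine_product line_form_affine by (simp add: algebra_simps)

text \<open>Two different line pairs pass through four points in general position.\<close>

lemma not_is_the_conic_four_points:
  assumes tri: "\<not> collinear3 A B C" and off: "off_sidelines A B C P"
  shows "\<not> is_the_conic q {A, B, C, P}"
proof
  assume q: "is_the_conic q {A, B, C, P}"
  define X1 where "X1 = 2*B - A"
  define X2 where "X2 = 2*C - A"
  define t where "t = Im ((B - A) * cnj (C - A))"
  have "t \<noteq> 0" using tri unfolding collinear3_def t_def .
  moreover have "line_form B P X1 \<noteq> 0" "line_form C P X2 \<noteq> 0"
    using off unfolding off_sidelines_def collinear3_def line_form_def X1_def X2_def
    by (simp_all add: algebra_simps)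
  moreover have "line_form A B X1 = 0" "line_form A C X1 = 2 * t"
    "line_form A C X2 = 0" "line_form A B X2 = - 2 * t"
    unfolding line_form_def X1_def X2_def t_def by (simp_all add: algebra_simps)
  ultimately have ev: "conic_eval (line_pair A B C P) X1 = 0" "conic_eval (line_pair A B C P) X2 \<noteq> 0"
    "conic_eval (line_pair A C B P) X1 \<noteq> 0" "conic_eval (line_pair A C B P) X2 = 0"
    unfolding conic_eval_line_pair by simp_all
  moreover have "line_pair A B C P \<noteq> (0, 0, 0, 0, 0, 0)" "line_pair A C B P \<noteq> (0, 0, 0, 0, 0, 0)"
    using ev(2,3) conic_eval_zero by force+
  ultimately have "conic_through (line_pair A B C P) {A, B, C, P}" "conic_through (line_pair A C B P) {A, B, C, P}"
    unfolding conic_through_def by (simp_all add: conic_eval_line_pair)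
  then obtain k1 k2 where k: "line_pair A B C P = conic_scale k1 q" "line_pair A C B P = conic_scale k2 q"
    using q unfolding is_the_conic_def by blast
  have "conic_eval q X1 \<noteq> 0" using ev(3) unfolding k conic_eval_scale by simp
  then have "k1 = 0" using ev(1) unfolding k conic_eval_scale by simp
  then show False using ev(2) unfolding k conic_eval_scale by simp
qed

lemma is_the_conic_imp_not_vertex:
  assumes "\<not> collinear3 A B C" "off_sidelines A B C P" "is_the_conic q {A, B, C, X, P}"
  shows "X \<notin> {A, B, C}"
proof
  assume "X \<in> {A, B, C}"
  then have "{A, B, C, X, P} = {A, B, C, P}" by auto
  then show False using assms not_is_the_conic_four_points by metis
qed

subsection \<open>Circumconics\<close>

definition circumconic :: "complex \<Rightarrow> complex \<Rightarrow> complex \<Rightarrow> real \<Rightarrow> real \<Rightarrow> real \<Rightarrow> conic" where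
  "circumconic A B C k1 k2 k3 = conic_add (conic_scale k1 (line_pair C A A B))
     (conic_add (conic_scale k2 (line_pair A B B C)) (conic_scale k3 (line_pair B C C A)))"

lemma conic_eval_circumconic:
  "conic_eval (circumconic A B C k1 k2 k3) X = k1 * (line_form C A X * line_form A B X)
     + k2 * (line_form A B X * line_form B C X) + k3 * (line_form B C X * line_form C A X)"
  unfolding circumconic_def conic_eval_add conic_eval_scale conic_eval_line_pair by simp

lemma circumconic_through_vertices:
  "conic_eval (circumconic A B C k1 k2 k3) A = 0" "conic_eval (circumconic A B C k1 k2 k3) B = 0"
  "conic_eval (circumconic A B C k1 k2 k3) C = 0"
  unfolding conic_eval_circumconic by simp_all

lemma circumconic_nonzero:
  assumes tri: "\<not> collinear3 A B C" and k: "k1 \<noteq> 0 \<or> k2 \<noteq> 0 \<or> k3 \<noteq> 0"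
  shows "circumconic A B C k1 k2 k3 \<noteq> (0, 0, 0, 0, 0, 0)"
proof -
  note s1 = line_forms_at_reflected_vertex[OF tri]
  note s2 = line_forms_at_reflected_vertex[OF not_collinear3_rotate(1)[OF tri]]
  note s3 = line_forms_at_reflected_vertex[OF not_collinear3_rotate(2)[OF tri]]
  have "\<exists>X. conic_eval (circumconic A B C k1 k2 k3) X \<noteq> 0"
    using k
  proof (elim disjE)
    assume "k1 \<noteq> 0"
    then show ?thesis using s2 by (intro exI[of _ "2*C - B"]) (simp add: conic_eval_circumconic)
  next
    assume "k2 \<noteq> 0"
    then show ?thesis using s3 by (intro exI[of _ "2*A - C"]) (simp add: conic_eval_circumconic)
  next
    assume "k3 \<noteq> 0"
    then show ?thesis using s1 by (intro exI[of _ "2*B - A"]) (simp add: conic_eval_circumconic)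
  qed
  then show ?thesis using conic_eval_zero by force
qed

lemma cross_eq_0_imp_eq:
  fixes x1 x2 x3 y1 y2 y3 K :: real
  assumes "x1 + x2 + x3 = K" "y1 + y2 + y3 = K" "K \<noteq> 0"
    and "x2*y3 - x3*y2 = 0" "x3*y1 - x1*y3 = 0" "x1*y2 - x2*y1 = 0"
  shows "x2 = y2" "x3 = y3"
proof -
  have e: "x1 = K - x2 - x3" "y1 = K - y2 - y3" using assms(1,2) by linarith+
  have "K * (y2 - x2) = (x1*y2 - x2*y1) - (x2*y3 - x3*y2)"
    "K * (y3 - x3) = (x2*y3 - x3*y2) - (x3*y1 - x1*y3)" unfolding e by algebra+
  then have "K * (y2 - x2) = 0" "K * (y3 - x3) = 0" using assms(4-6) by simp_all
  then show "x2 = y2" "x3 = y3" using assms(3) by simp_all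
qed

text \<open>The determinant of \<open>(x, y, m)\<close> vanishes; \<open>y - x\<close> and \<open>m\<close> lie in the plane of zero
  coordinate sum, which does not contain \<open>x\<close> when \<open>K \<noteq> 0\<close>.\<close>

lemma det_zero_sum_parallel:
  fixes x1 x2 x3 y1 y2 y3 m1 m2 m3 K :: real
  assumes "x1 + x2 + x3 = K" "y1 + y2 + y3 = K" "m1 + m2 + m3 = 0"
    and "(x2*y3 - x3*y2)*m1 + (x3*y1 - x1*y3)*m2 + (x1*y2 - x2*y1)*m3 = 0"
  shows "K * ((y1 - x1)*m2 - (y2 - x2)*m1) = 0"
proof -
  have e: "x3 = K - x1 - x2" "y3 = K - y1 - y2" "m3 = - m1 - m2" using assms(1-3) by linarith+
  show ?thesis using assms(4) unfolding e by algebra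
qed

text \<open>In line-form coordinates \<open>x\<^sub>i\<close> of \<open>P\<close> and \<open>y\<^sub>i\<close> of \<open>P'\<close>, the circumconic through \<open>P\<close> and \<open>P'\<close>
  has coefficients \<open>(1/x) \<times> (1/y)\<close>, rescaled by \<open>x\<^sub>1 x\<^sub>2 x\<^sub>3 y\<^sub>1 y\<^sub>2 y\<^sub>3\<close>; since isogonality makes
  \<open>x\<^sub>i y\<^sub>i\<close> proportional to the squared side lengths \<open>l\<^sub>i\<close>, this is \<open>l\<^sub>i (x \<times> y)\<^sub>i\<close>.\<close>

definition isogonal_circumconic :: "complex \<Rightarrow> complex \<Rightarrow> complex \<Rightarrow> complex \<Rightarrow> complex \<Rightarrow> conic" where
  "isogonal_circumconic A B C P P' = circumconic A B C
     ((cmod (C - B))^2 * (line_form C A P * line_form A B P' - line_form A B P * line_form C A P'))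
     ((cmod (A - C))^2 * (line_form A B P * line_form B C P' - line_form B C P * line_form A B P'))
     ((cmod (B - A))^2 * (line_form B C P * line_form C A P' - line_form C A P * line_form B C P'))"

lemma isogonal_circumconic_nonzero:
  assumes tri: "\<not> collinear3 A B C" and "P \<noteq> P'"
  shows "isogonal_circumconic A B C P P' \<noteq> (0, 0, 0, 0, 0, 0)"
proof -
  define x1 x2 x3 where "x1 = line_form B C P" and "x2 = line_form C A P" and "x3 = line_form A B P"
  define y1 y2 y3 where "y1 = line_form B C P'" and "y2 = line_form C A P'" and "y3 = line_form A B P'"
  have "\<not> (x2*y3 - x3*y2 = 0 \<and> x3*y1 - x1*y3 = 0 \<and> x1*y2 - x2*y1 = 0)"
  proof (intro notI, elim conjE)
    assume cross: "x2*y3 - x3*y2 = 0" "x3*y1 - x1*y3 = 0" "x1*y2 - x2*y1 = 0"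
    have "x1 + x2 + x3 = line_form A B C" "y1 + y2 + y3 = line_form A B C"
      unfolding x1_def x2_def x3_def y1_def y2_def y3_def by (rule line_form_sum)+
    then have "y2 - x2 = 0" "y3 - x3 = 0"
      using cross_eq_0_imp_eq[OF _ _ line_form_nonzero[OF tri] cross] by simp_all
    moreover have "y2 - x2 = Im ((P' - P) * cnj (A - C))" "y3 - x3 = Im ((P' - P) * cnj (B - A))"
      unfolding x2_def y2_def x3_def y3_def line_form_def by (simp_all add: algebra_simps)
    ultimately have "Im ((B - A) * cnj (A - C)) = 0"
      using Im_mult_cnj_eq_0_trans[of "P' - P" "B - A" "A - C"] \<open>P \<noteq> P'\<close> by simp
    then show False using tri unfolding collinear3_def by (simp add: algebra_simps)
  qed
  moreover have "(cmod (C - B))^2 > 0" "(cmod (A - C))^2 > 0" "(cmod (B - A))^2 > 0"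
    using not_collinear3_imp_distinct[OF tri] by auto
  ultimately show ?thesis using circumconic_nonzero[OF tri] unfolding isogonal_circumconic_def
    by (simp add: x1_def x2_def x3_def y1_def y2_def y3_def)
qed

lemma isogonal_circumconic_through:
  assumes tri: "\<not> collinear3 A B C" and iso: "isogonal_conjugates A B C P P'" and PP': "P \<noteq> P'"
  shows "conic_through (isogonal_circumconic A B C P P') {A, B, C, P, P'}"
proof -
  define x1 x2 x3 where "x1 = line_form B C P" and "x2 = line_form C A P" and "x3 = line_form A B P"
  define y1 y2 y3 where "y1 = line_form B C P'" and "y2 = line_form C A P'" and "y3 = line_form A B P'"
  define l1 l2 l3 where "l1 = (cmod (C - B))^2" and "l2 = (cmod (A - C))^2" and "l3 = (cmod (B - A))^2"
  have ev: "conic_eval (isogonal_circumconic A B C P P') X = l1*(x2*y3 - x3*y2)*(line_form C A X * line_form A B X)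
     + l2*(x3*y1 - x1*y3)*(line_form A B X * line_form B C X) + l3*(x1*y2 - x2*y1)*(line_form B C X * line_form C A X)" for X
    unfolding isogonal_circumconic_def conic_eval_circumconic x1_def x2_def x3_def y1_def y2_def y3_def
      l1_def l2_def l3_def by simp
  have "isogonal_at A B C P P'" "isogonal_at B C A P P'" "isogonal_at C A B P P'"
    using iso unfolding isogonal_conjugates_def by simp_all
  then have rel: "x3*y3*l2 = x2*y2*l3" "x1*y1*l3 = x3*y3*l1" "x2*y2*l1 = x1*y1*l2"
    unfolding isogonal_at_iff_line_forms[OF tri] isogonal_at_iff_line_forms[OF not_collinear3_rotate(1)[OF tri]]
      isogonal_at_iff_line_forms[OF not_collinear3_rotate(2)[OF tri]]
    by (simp_all add: x1_def x2_def x3_def y1_def y2_def y3_def l1_def l2_def l3_def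
      line_form_swap[of A C] line_form_swap[of B A] line_form_swap[of C B] norm_minus_commute)
  have "conic_eval (isogonal_circumconic A B C P P') P = 0"
    using rel unfolding ev x1_def[symmetric] x2_def[symmetric] x3_def[symmetric] by algebra
  moreover have "conic_eval (isogonal_circumconic A B C P P') P' = 0"
    using rel unfolding ev y1_def[symmetric] y2_def[symmetric] y3_def[symmetric] by algebra
  ultimately show ?thesis
    using isogonal_circumconic_nonzero[OF tri PP'] circumconic_through_vertices
    unfolding conic_through_def by (simp add: isogonal_circumconic_def)
qed

subsection \<open>Concyclic points\<close>

lemma cnj_on_circle:
  assumes "cmod z = r" "r \<noteq> 0"
  shows "cnj z = of_real (r^2) * inverse z" "z * inverse z = 1"
proof -
  have "z \<noteq> 0" using assms by auto
  then show "z * inverse z = 1" by simp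
  show "cnj z = of_real (r^2) * inverse z"
    using complex_norm_square[of z] \<open>z \<noteq> 0\<close> assms(1) by (simp add: field_simps)
qed

lemma concyclic_not_collinear:
  assumes "cmod (A - Oc) = r" "cmod (B - Oc) = r" "cmod (C - Oc) = r" "A \<noteq> B" "B \<noteq> C" "C \<noteq> A"
  shows "\<not> collinear3 A B C"
proof
  define a b c where "a = A - Oc" and "b = B - Oc" and "c = C - Oc"
  have "r \<noteq> 0" using assms(1,2,4) by auto
  note u = cnj_on_circle[OF assms(1) this, folded a_def] cnj_on_circle[OF assms(2) this, folded b_def]
    cnj_on_circle[OF assms(3) this, folded c_def]
  assume "collinear3 A B C"
  then have "Im ((b - a) * cnj (c - a)) = 0" unfolding collinear3_def a_def b_def c_def by simp
  then have "(b - a) * cnj (c - a) = cnj ((b - a) * cnj (c - a))" by (rule Im_eq_0_imp_eq_cnj)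
  then have "(b - a) * (cnj c - cnj a) = (cnj b - cnj a) * (c - a)" by simp
  then have "of_real (r^2) * (b - a) * (c - b) * (a - c) = 0" unfolding u(1,3,5) using u(2,4,6) by algebra
  then show False using assms(4-6) \<open>r \<noteq> 0\<close> unfolding a_def b_def c_def by simp
qed

text \<open>A point on the circumcircle has no isogonal conjugate (its conjugate is at infinity).\<close>

lemma concyclic_isogonal_at_two_vertices:
  assumes "cmod a = r" "cmod b = r" "cmod c = r" "cmod p = r"
    and isoA: "Im ((b - a) * (c - a) * cnj ((p - a) * (q - a))) = 0"
    and isoB: "Im ((c - b) * (a - b) * cnj ((p - b) * (q - b))) = 0"
    and "a \<noteq> b" "b \<noteq> c" "c \<noteq> a" "p \<noteq> a" "p \<noteq> b"
  shows "p = c"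
proof -
  define \<rho> where "\<rho> = complex_of_real (r^2)"
  have "r \<noteq> 0" using assms(1,2,7) by auto
  then have "\<rho> \<noteq> 0" unfolding \<rho>_def by simp
  note u = cnj_on_circle[OF assms(1) \<open>r \<noteq> 0\<close>, folded \<rho>_def] cnj_on_circle[OF assms(2) \<open>r \<noteq> 0\<close>, folded \<rho>_def]
    cnj_on_circle[OF assms(3) \<open>r \<noteq> 0\<close>, folded \<rho>_def] cnj_on_circle[OF assms(4) \<open>r \<noteq> 0\<close>, folded \<rho>_def]
  have "(b - a) * (c - a) * cnj ((p - a) * (q - a)) = cnj ((b - a) * (c - a) * cnj ((p - a) * (q - a)))"
    by (rule Im_eq_0_imp_eq_cnj[OF isoA])
  then have "(b - a) * (c - a) * ((cnj p - cnj a) * (cnj q - cnj a))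
      = (cnj b - cnj a) * (cnj c - cnj a) * ((p - a) * (q - a))" by simp
  then have "\<rho> * (p - a) * (b - a) * (c - a) * (\<rho> * (p*q - a*p - b*c) + a*b*c*cnj q) = 0"
    unfolding u(1,3,5,7) using u(2,4,6,8) by algebra
  then have 1: "\<rho> * (p*q - a*p - b*c) + a*b*c*cnj q = 0" using assms(7-) \<open>\<rho> \<noteq> 0\<close> by simp
  have "(c - b) * (a - b) * cnj ((p - b) * (q - b)) = cnj ((c - b) * (a - b) * cnj ((p - b) * (q - b)))"
    by (rule Im_eq_0_imp_eq_cnj[OF isoB])
  then have "(c - b) * (a - b) * ((cnj p - cnj b) * (cnj q - cnj b))
      = (cnj c - cnj b) * (cnj a - cnj b) * ((p - b) * (q - b))" by simp
  then have "\<rho> * (p - b) * (c - b) * (a - b) * (\<rho> * (p*q - b*p - c*a) + a*b*c*cnj q) = 0"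
    unfolding u(1,3,5,7) using u(2,4,6,8) by algebra
  then have 2: "\<rho> * (p*q - b*p - c*a) + a*b*c*cnj q = 0" using assms(7-) \<open>\<rho> \<noteq> 0\<close> by simp
  have "\<rho> * (a - b) * (p - c) = 0" using 1 2 by algebra
  then show ?thesis using \<open>\<rho> \<noteq> 0\<close> \<open>a \<noteq> b\<close> by simp
qed

lemma concyclic_isogonal_direction:
  assumes "cmod a = r" "cmod b = r" "cmod c = r" "cmod d = r"
    and iso: "Im ((a - c) * (b - c) * cnj ((d - c) * w)) = 0"
    and "a \<noteq> c" "b \<noteq> c" "d \<noteq> c"
  shows "of_real (r^2) * d * w = - a * b * c * cnj w"
proof -
  define \<rho> where "\<rho> = complex_of_real (r^2)"
  have "r \<noteq> 0" using assms(1,3,6) by auto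
  then have "\<rho> \<noteq> 0" unfolding \<rho>_def by simp
  note u = cnj_on_circle[OF assms(1) \<open>r \<noteq> 0\<close>, folded \<rho>_def] cnj_on_circle[OF assms(2) \<open>r \<noteq> 0\<close>, folded \<rho>_def]
    cnj_on_circle[OF assms(3) \<open>r \<noteq> 0\<close>, folded \<rho>_def] cnj_on_circle[OF assms(4) \<open>r \<noteq> 0\<close>, folded \<rho>_def]
  have "(a - c) * (b - c) * cnj ((d - c) * w) = cnj ((a - c) * (b - c) * cnj ((d - c) * w))"
    by (rule Im_eq_0_imp_eq_cnj[OF iso])
  then have "(a - c) * (b - c) * ((cnj d - cnj c) * cnj w) = (cnj a - cnj c) * (cnj b - cnj c) * ((d - c) * w)"
    by simp
  then have "\<rho> * (a - c) * (b - c) * (c - d) * (a*b*c*cnj w + \<rho> * d * w) = 0"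
    unfolding u(1,3,5,7) using u(2,4,6,8) by algebra
  then have "a*b*c*cnj w + \<rho> * d * w = 0" using assms(6-) \<open>\<rho> \<noteq> 0\<close> by simp
  then show ?thesis unfolding \<rho>_def by (simp add: algebra_simps eq_neg_iff_add_eq_0)
qed

lemma concyclic_chord_direction:
  assumes "cmod d = r" "cmod d' = r"
    and par: "collinear3 d d' (d + w)" and tangent: "d' = d \<longrightarrow> Re (d * cnj w) = 0"
  shows "d * d' * cnj w = - of_real (r^2) * w"
proof (cases "r = 0")
  case True
  then show ?thesis using assms(1) by simp
next
  case False
  define \<rho> where "\<rho> = complex_of_real (r^2)"
  note u = cnj_on_circle[OF assms(1) False, folded \<rho>_def] cnj_on_circle[OF assms(2) False, folded \<rho>_def]
  show ?thesis
  proof (cases "d' = d")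
    case True
    then have "d * cnj w + cnj d * w = 0" using tangent by (simp add: complex_eq_iff)
    then have "d * d * cnj w + \<rho> * w = 0" unfolding u(1) using u(2) by algebra
    then show ?thesis using True unfolding \<rho>_def by (simp add: eq_neg_iff_add_eq_0)
  next
    case False
    have "Im ((d' - d) * cnj w) = 0" using par unfolding collinear3_def by simp
    then have "(d' - d) * cnj w = cnj ((d' - d) * cnj w)" by (rule Im_eq_0_imp_eq_cnj)
    then have "(d' - d) * cnj w = (cnj d' - cnj d) * w" by simp
    then have "(d' - d) * (d * d' * cnj w + \<rho> * w) = 0" unfolding u(1,3) using u(2,4) by algebra
    then have "d * d' * cnj w + \<rho> * w = 0" using False by simp
    then show ?thesis unfolding \<rho>_def by (simp add: eq_neg_iff_add_eq_0)
  qed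
qed

subsection \<open>The complex form of a conic\<close>

text \<open>For \<open>z = x + i y\<close> the quadratic part \<open>a x\<^sup>2 + b x y + c y\<^sup>2\<close> equals
  \<open>Re (\<kappa> z\<^sup>2) + (a + c) \<bar>z\<bar>\<^sup>2 / 2\<close>, so \<open>u\<close> is a principal direction iff \<open>\<kappa> u\<^sup>2\<close> is real.\<close>

definition conic_kappa :: "conic \<Rightarrow> complex" where
  "conic_kappa q = (case q of (a, b, c, d, e, f) \<Rightarrow> Complex ((a - c) / 2) (- b / 2))"

lemma conic_eval_complex:
  obtains \<mu> \<epsilon>1 \<epsilon>2 \<phi> where "\<And>z. of_real (2 * conic_eval q z) = conic_kappa q * z^2 + cnj (conic_kappa q) * (cnj z)^2
    + \<mu> * z * cnj z + \<epsilon>1 * z + \<epsilon>2 * cnj z + \<phi>"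
proof -
  obtain a b c d e f where q: "q = (a, b, c, d, e, f)" by (cases q) auto
  show ?thesis
    by (rule that[of "of_real (a + c)" "Complex d (- e)" "Complex d e" "of_real (2 * f)"])
      (simp add: q conic_kappa_def conic_eval_def complex_eq_iff power2_eq_square algebra_simps)
qed

lemma Im_conic_kappa_mult_square:
  "Im (conic_kappa (a, b, c, d, e, f) * u^2) = (a - c) * Re u * Im u - (b/2) * ((Re u)^2 - (Im u)^2)"
  by (simp add: conic_kappa_def power2_eq_square algebra_simps)

lemma principal_direction_iff: "principal_direction q u \<longleftrightarrow> u \<noteq> 0 \<and> Im (conic_kappa q * u^2) = 0"
proof -
  obtain a b c d e f where q: "q = (a, b, c, d, e, f)" by (cases q) auto
  define u1 u2 where "u1 = Re u" and "u2 = Im u"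
  have eigen_iff: "(\<exists>k. a * u1 + (b/2) * u2 = k * u1 \<and> (b/2) * u1 + c * u2 = k * u2)
      \<longleftrightarrow> (a - c) * u1 * u2 - (b/2) * (u1^2 - u2^2) = 0" if "u \<noteq> 0"
  proof
    assume "\<exists>k. a * u1 + (b/2) * u2 = k * u1 \<and> (b/2) * u1 + c * u2 = k * u2"
    then obtain k where "a * u1 + (b/2) * u2 = k * u1" "(b/2) * u1 + c * u2 = k * u2" by blast
    then have "(a * u1 + (b/2) * u2) * u2 = ((b/2) * u1 + c * u2) * u1" by (simp add: algebra_simps)
    then show "(a - c) * u1 * u2 - (b/2) * (u1^2 - u2^2) = 0" by (simp add: power2_eq_square algebra_simps)
  next
    assume h: "(a - c) * u1 * u2 - (b/2) * (u1^2 - u2^2) = 0"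
    show "\<exists>k. a * u1 + (b/2) * u2 = k * u1 \<and> (b/2) * u1 + c * u2 = k * u2"
    proof (cases "u1 = 0")
      case True
      then have "u2 \<noteq> 0" using that unfolding u1_def u2_def by (simp add: complex_eq_iff)
      moreover have "b * u2^2 = 0" using h True by (simp add: power2_eq_square)
      ultimately show ?thesis using True by (intro exI[of _ c]) simp
    next
      case False
      have "((b/2) * u1 + c * u2) * u1 = (a * u1 + (b/2) * u2) * u2"
        using h by (simp add: power2_eq_square algebra_simps)
      then show ?thesis using False by (intro exI[of _ "(a * u1 + (b/2) * u2) / u1"]) (simp add: field_simps)
    qed
  qed
  show ?thesis
    unfolding principal_direction_def q Im_conic_kappa_mult_square u1_def[symmetric] u2_def[symmetric]
    using eigen_iff by auto
qed

lemma quartic_root_product: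
  fixes g0 g1 g2 g3 g4 r1 r2 r3 r4 :: complex
  assumes G: "\<And>z. G z = g4*z^4 + g3*z^3 + g2*z^2 + g1*z + g0"
    and "G r1 = 0" "G r2 = 0" "G r3 = 0" "G r4 = 0"
    and "r1 \<noteq> r2" "r1 \<noteq> r3" "r1 \<noteq> r4" "r2 \<noteq> r3" "r2 \<noteq> r4" "r3 \<noteq> r4"
  shows "g0 = g4 * r1 * r2 * r3 * r4"
proof -
  have "(r1-r2)*(r1-r3)*(r1-r4)*(r2-r3)*(r2-r4)*(r3-r4)*(g0 - g4*r1*r2*r3*r4) =
    -(G r1*r2*r3*r4*(r2-r3)*(r2-r4)*(r3-r4) - G r2*r1*r3*r4*(r1-r3)*(r1-r4)*(r3-r4)
      + G r3*r1*r2*r4*(r1-r2)*(r1-r4)*(r2-r4) - G r4*r1*r2*r3*(r1-r2)*(r1-r3)*(r2-r3))"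
    unfolding G by algebra
  then show ?thesis using assms(2-) by simp
qed

lemma conic_through_four_concyclic:
  assumes "cmod x1 = r" "cmod x2 = r" "cmod x3 = r" "cmod x4 = r"
    and "x1 \<noteq> x2" "x1 \<noteq> x3" "x1 \<noteq> x4" "x2 \<noteq> x3" "x2 \<noteq> x4" "x3 \<noteq> x4"
    and "conic_eval q (Oc + x1) = 0" "conic_eval q (Oc + x2) = 0"
        "conic_eval q (Oc + x3) = 0" "conic_eval q (Oc + x4) = 0"
  shows "cnj (conic_kappa q) * of_real (r^4) = conic_kappa q * x1 * x2 * x3 * x4"
proof -
  define \<kappa> \<rho> where "\<kappa> = conic_kappa q" and "\<rho> = complex_of_real (r^2)"
  obtain \<mu> \<epsilon>1 \<epsilon>2 \<phi> where ev: "\<And>z. of_real (2 * conic_eval q z) = \<kappa> * z^2 + cnj \<kappa> * (cnj z)^2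
    + \<mu> * z * cnj z + \<epsilon>1 * z + \<epsilon>2 * cnj z + \<phi>"
    using conic_eval_complex unfolding \<kappa>_def by blast
  define c3 c2 c1 where "c3 = 2*\<kappa>*Oc + \<mu>*cnj Oc + \<epsilon>1"
    and "c2 = \<kappa>*Oc^2 + cnj \<kappa>*(cnj Oc)^2 + \<mu>*Oc*cnj Oc + \<mu>*\<rho> + \<epsilon>1*Oc + \<epsilon>2*cnj Oc + \<phi>"
    and "c1 = 2*cnj \<kappa>*cnj Oc*\<rho> + \<mu>*Oc*\<rho> + \<epsilon>2*\<rho>"
  define G where "G = (\<lambda>x. \<kappa> * x^4 + c3 * x^3 + c2 * x^2 + c1 * x + cnj \<kappa> * \<rho>^2)"
  have root: "G x = 0" if "cmod x = r" "conic_eval q (Oc + x) = 0" for x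
  proof -
    have \<rho>: "\<rho> = x * cnj x" using mult_cnj_eq_if_cmod_eq[OF that(1)] unfolding \<rho>_def ..
    have "G x = x^2 * (\<kappa> * (Oc + x)^2 + cnj \<kappa> * (cnj Oc + cnj x)^2 + \<mu> * (Oc + x) * (cnj Oc + cnj x)
      + \<epsilon>1 * (Oc + x) + \<epsilon>2 * (cnj Oc + cnj x) + \<phi>)"
      unfolding G_def c3_def c2_def c1_def \<rho> by algebra
    then show "G x = 0" using ev[of "Oc + x"] that(2) by simp
  qed
  have "cnj \<kappa> * \<rho>^2 = \<kappa> * x1 * x2 * x3 * x4"
    using quartic_root_product[of G, OF _ root root root root] assms unfolding G_def by blast
  then show ?thesis unfolding \<kappa>_def \<rho>_def by simp
qed

lemma affine_form_eq_0_at_triangle: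
  fixes p1 p2 p3 :: real
  assumes tri: "\<not> collinear3 A B C"
    and "p1 * Re A + p2 * Im A + p3 = 0" "p1 * Re B + p2 * Im B + p3 = 0" "p1 * Re C + p2 * Im C + p3 = 0"
  shows "p1 = 0" "p2 = 0" "p3 = 0"
proof -
  define t where "t = Im ((B - A) * cnj (C - A))"
  have "t \<noteq> 0" using tri unfolding collinear3_def t_def .
  have t: "t = (Im B - Im A) * (Re C - Re A) - (Re B - Re A) * (Im C - Im A)"
    unfolding t_def by (simp add: algebra_simps)
  have "p1 * t = 0" "p2 * t = 0" using assms(2-4) unfolding t by algebra+
  then show "p1 = 0" "p2 = 0" using \<open>t \<noteq> 0\<close> by simp_all
  then show "p3 = 0" using assms(2) by simp
qed

text \<open>A conic with \<open>\<kappa> = 0\<close> is \<open>a (\<bar>z - Oc\<bar>\<^sup>2 - R\<^sup>2) + (affine form)\<close>; through three points of the circle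
  the affine form vanishes, so it is the circle itself.\<close>

lemma conic_kappa_eq_0_imp_circle:
  assumes "conic_kappa q = 0" and tri: "\<not> collinear3 A B C"
    and circ: "cmod (B - Oc) = cmod (A - Oc)" "cmod (C - Oc) = cmod (A - Oc)"
    and q: "conic_through q {A, B, C}" and X: "conic_eval q X = 0"
  shows "cmod (X - Oc) = cmod (A - Oc)"
proof -
  obtain a b c d e f where q_eq: "q = (a, b, c, d, e, f)" by (cases q) auto
  have ac: "c = a" "b = 0" using assms(1) unfolding q_eq conic_kappa_def by (auto simp: complex_eq_iff)
  define R2 where "R2 = (cmod (A - Oc))^2"
  define p1 p2 p3 where "p1 = d + 2*a*Re Oc" and "p2 = e + 2*a*Im Oc"
    and "p3 = f - a*((Re Oc)^2 + (Im Oc)^2) + a * R2"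
  have ev: "conic_eval q Z = a * ((cmod (Z - Oc))^2 - R2) + (p1 * Re Z + p2 * Im Z + p3)" for Z
    unfolding q_eq conic_eval_def ac p1_def p2_def p3_def cmod_power2 by (simp add: power2_eq_square algebra_simps)
  have "p1 * Re A + p2 * Im A + p3 = 0" "p1 * Re B + p2 * Im B + p3 = 0" "p1 * Re C + p2 * Im C + p3 = 0"
    using q ev[of A] ev[of B] ev[of C] circ unfolding conic_through_def R2_def by simp_all
  then have p: "p1 = 0" "p2 = 0" "p3 = 0" using affine_form_eq_0_at_triangle[OF tri] by blast+
  have "a \<noteq> 0"
  proof
    assume "a = 0"
    then have "d = 0" "e = 0" "f = 0" using p unfolding p1_def p2_def p3_def by auto
    then show False using q \<open>a = 0\<close> ac unfolding q_eq conic_through_def by simp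
  qed
  then show ?thesis using X ev[of X] p unfolding R2_def by simp
qed

subsection \<open>Axes of a central conic\<close>

lemma central_conic_center:
  assumes "conic_central q"
  obtains z0 where "is_center q z0" "\<And>z. is_center q z \<Longrightarrow> z = z0"
proof -
  obtain a b c d e f where q: "q = (a, b, c, d, e, f)" by (cases q) auto
  define \<delta> where "\<delta> = 4*a*c - b^2"
  have "\<delta> \<noteq> 0" using assms unfolding q conic_central_def \<delta>_def by simp
  define z0 where "z0 = Complex ((b*e - 2*c*d) / \<delta>) ((b*d - 2*a*e) / \<delta>)"
  have center_iff: "is_center q z \<longleftrightarrow> z = z0" for z
  proof
    assume "is_center q z"
    then have h: "2*a*Re z + b*Im z + d = 0" "b*Re z + 2*c*Im z + e = 0" unfolding is_center_def q by auto
    have "Re z * \<delta> = b*e - 2*c*d" "Im z * \<delta> = b*d - 2*a*e" using h unfolding \<delta>_def by algebra+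
    then show "z = z0" unfolding z0_def using \<open>\<delta> \<noteq> 0\<close> by (simp add: complex_eq_iff field_simps)
  next
    assume "z = z0"
    then have z: "Re z * \<delta> = b*e - 2*c*d" "Im z * \<delta> = b*d - 2*a*e" unfolding z0_def using \<open>\<delta> \<noteq> 0\<close> by simp_all
    have "(2*a*Re z + b*Im z + d) * \<delta> = 0" "(b*Re z + 2*c*Im z + e) * \<delta> = 0"
      using z unfolding \<delta>_def by algebra+
    then show "is_center q z" unfolding is_center_def q using \<open>\<delta> \<noteq> 0\<close> by simp
  qed
  show ?thesis using that center_iff by blast
qed

lemma quadratic_coeffs_unique:
  fixes a1 b1 c1 a2 b2 c2 :: real
  assumes "\<And>t. a1*t^2 + b1*t + c1 = a2*t^2 + b2*t + c2"
  shows "a1 = a2" "b1 = b2" "c1 = c2"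
proof -
  have "c1 = c2" "a1 + b1 + c1 = a2 + b2 + c2" "a1 - b1 + c1 = a2 - b2 + c2"
    using assms[of 0] assms[of 1] assms[of "-1"] by simp_all
  then show "a1 = a2" "b1 = b2" "c1 = c2" by linarith+
qed

lemma tangent_line_iff:
  assumes "P \<noteq> P'" "\<alpha> \<noteq> 0" and line: "\<And>t. conic_eval q (P + of_real t * (P' - P)) = \<alpha> * t^2 + \<beta> * t"
  shows "tangent_line q P P' \<longleftrightarrow> \<beta> = 0"
proof
  assume "tangent_line q P P'"
  then obtain \<alpha>' \<beta>' \<gamma>' where "\<forall>t. conic_eval q (P + of_real t * (P' - P)) = \<alpha>' * t^2 + \<beta>' * t + \<gamma>'"
    and discr: "\<beta>'^2 = 4 * \<alpha>' * \<gamma>'" unfolding tangent_line_def by blast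
  then have "\<alpha> * t^2 + \<beta> * t + 0 = \<alpha>' * t^2 + \<beta>' * t + \<gamma>'" for t using line by simp
  then have "\<beta> = \<beta>'" "0 = \<gamma>'" using quadratic_coeffs_unique by blast+
  then show "\<beta> = 0" using discr by simp
next
  assume "\<beta> = 0"
  then show "tangent_line q P P'" unfolding tangent_line_def using assms
    by (intro conjI exI[of _ \<alpha>] exI[of _ \<beta>] exI[of _ 0]) auto
qed

text \<open>Along an eigenvector \<open>w\<close> (eigenvalue \<open>\<sigma>\<close>) of the quadratic part, the gradient at \<open>P\<close> pairs with \<open>w\<close>
  as \<open>2 \<sigma> (P - z0) \<cdot> w\<close>, because the gradient vanishes at the centre \<open>z0\<close>.\<close>

lemma conic_eval_along_eigenvector:
  assumes "is_center (a, b, c, d, e, f) z0" "conic_eval (a, b, c, d, e, f) P = 0"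
    and "a * Re w + (b/2) * Im w = \<sigma> * Re w" "(b/2) * Re w + c * Im w = \<sigma> * Im w"
  shows "conic_eval (a, b, c, d, e, f) (P + of_real t * w) = \<sigma> * (cmod w)^2 * t^2 + 2 * \<sigma> * Re ((P - z0) * cnj w) * t"
proof -
  have center: "2*a*Re z0 + b*Im z0 + d = 0" "b*Re z0 + 2*c*Im z0 + e = 0"
    using assms(1) unfolding is_center_def by simp_all
  have "conic_eval (a, b, c, d, e, f) (P + of_real t * w) = conic_eval (a, b, c, d, e, f) P
      + (Re w * (a * Re w + (b/2) * Im w) + Im w * ((b/2) * Re w + c * Im w)) * t^2
      + ((2*a*Re P + b*Im P + d) * Re w + (b*Re P + 2*c*Im P + e) * Im w) * t"
    unfolding conic_eval_def by (simp add: power2_eq_square algebra_simps)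
  also have "(2*a*Re P + b*Im P + d) * Re w + (b*Re P + 2*c*Im P + e) * Im w
      = 2 * ((Re P - Re z0) * (a * Re w + (b/2) * Im w) + (Im P - Im z0) * ((b/2) * Re w + c * Im w))"
    using center by algebra
  finally show ?thesis
    using assms(2) unfolding assms(3,4) cmod_power2 by (simp add: algebra_simps power2_eq_square)
qed

lemma axis_direction_iff_perp_or_parallel:
  assumes "conic_kappa q \<noteq> 0" and w: "principal_direction q w"
  shows "Im (conic_kappa q * u^2) = 0 \<longleftrightarrow> Re (u * cnj w) = 0 \<or> Im (u * cnj w) = 0"
proof -
  define k where "k = conic_kappa q * w^2"
  have "w \<noteq> 0" "Im k = 0" using w unfolding principal_direction_iff k_def by simp_all
  then have "k \<noteq> 0" using assms(1) unfolding k_def by simp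
  have "(w * cnj w)^2 = of_real (((cmod w)^2)^2)" unfolding complex_norm_square[symmetric] by simp
  then have "of_real ((cmod w)^4) * (conic_kappa q * u^2) = k * (u * cnj w)^2"
    unfolding k_def by (simp add: power_mult_distrib)
  then have "Im (of_real ((cmod w)^4) * (conic_kappa q * u^2)) = Im (k * (u * cnj w)^2)" by simp
  then have "(cmod w)^4 * Im (conic_kappa q * u^2) = Re k * Im ((u * cnj w)^2)"
    using \<open>Im k = 0\<close> by simp
  then have "Im (conic_kappa q * u^2) = 0 \<longleftrightarrow> Im ((u * cnj w)^2) = 0"
    using \<open>Im k = 0\<close> \<open>k \<noteq> 0\<close> \<open>w \<noteq> 0\<close> by (auto simp: complex_eq_iff)
  then show ?thesis unfolding Im_square_eq_0_iff .
qed

lemma axis_iff_tangent_or_through_center: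
  assumes central: "conic_central q" and "conic_kappa q \<noteq> 0" and P: "conic_eval q P = 0"
    and parallel: "principal_direction q (P' - P)"
  shows "(tangent_line q P P' \<or> line_through_center q P P') \<longleftrightarrow> on_major_or_minor_axis q P"
proof -
  obtain a b c d e f where q: "q = (a, b, c, d, e, f)" by (cases q) auto
  obtain z0 where z0: "is_center q z0" and unique: "\<And>z. is_center q z \<Longrightarrow> z = z0"
    using central_conic_center[OF central] by blast
  define u w where "u = P - z0" and "w = P' - P"
  obtain \<sigma> where "w \<noteq> 0" and eigen: "a * Re w + (b/2) * Im w = \<sigma> * Re w" "(b/2) * Re w + c * Im w = \<sigma> * Im w"
    using parallel unfolding principal_direction_def q w_def by auto
  have "\<sigma> \<noteq> 0"
  proof
    assume "\<sigma> = 0"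
    then have "(4*a*c - b^2) * Re w = 0" "(4*a*c - b^2) * Im w = 0" using eigen by algebra+
    then show False using central \<open>w \<noteq> 0\<close> unfolding q conic_central_def by (simp add: complex_eq_iff)
  qed
  have line: "\<And>t. conic_eval q (P + of_real t * (P' - P)) = \<sigma> * (cmod w)^2 * t^2 + 2 * \<sigma> * Re (u * cnj w) * t"
    using conic_eval_along_eigenvector[OF z0[unfolded q] P[unfolded q] eigen] unfolding q u_def w_def by simp
  have "P \<noteq> P'" "\<sigma> * (cmod w)^2 \<noteq> 0" using \<open>w \<noteq> 0\<close> \<open>\<sigma> \<noteq> 0\<close> by (auto simp: w_def)
  then have "tangent_line q P P' \<longleftrightarrow> 2 * \<sigma> * Re (u * cnj w) = 0" using tangent_line_iff line by blast
  then have tangent: "tangent_line q P P' \<longleftrightarrow> Re (u * cnj w) = 0" using \<open>\<sigma> \<noteq> 0\<close> by simp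
  have "line_through_center q P P' \<longleftrightarrow> collinear3 P P' z0"
    unfolding line_through_center_def using z0 unique by blast
  also have "\<dots> \<longleftrightarrow> Im (u * cnj w) = 0"
    unfolding collinear3_def u_def w_def by (simp add: algebra_simps)
  finally have center: "line_through_center q P P' \<longleftrightarrow> Im (u * cnj w) = 0" .
  have "on_major_or_minor_axis q P \<longleftrightarrow> P = z0 \<or> principal_direction q (P - z0)"
    unfolding on_major_or_minor_axis_def using z0 unique by blast
  then have axis: "on_major_or_minor_axis q P \<longleftrightarrow> Im (conic_kappa q * u^2) = 0"
    unfolding principal_direction_iff u_def by auto
  show ?thesis
    unfolding tangent center axis axis_direction_iff_perp_or_parallel[OF \<open>conic_kappa q \<noteq> 0\<close> parallel[folded w_def]] ..
qed

lemma isogonal_conjugate_not_on_circumcircle: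
  assumes tri: "\<not> collinear3 A B C"
    and circ: "cmod (B - Oc) = cmod (A - Oc)" "cmod (C - Oc) = cmod (A - Oc)"
    and iso: "isogonal_conjugates A B C P P'"
  shows "cmod (P - Oc) \<noteq> cmod (A - Oc)"
proof
  assume P: "cmod (P - Oc) = cmod (A - Oc)"
  define a b c p p' where "a = A - Oc" and "b = B - Oc" and "c = C - Oc" and "p = P - Oc" and "p' = P' - Oc"
  have "isogonal_at A B C P P'" "isogonal_at B C A P P'" and off: "off_sidelines A B C P"
    using iso unfolding isogonal_conjugates_def by simp_all
  then have "Im ((B - A) * (C - A) * cnj ((P - A) * (P' - A))) = 0"
    "Im ((C - B) * (A - B) * cnj ((P - B) * (P' - B))) = 0"
    using isogonal_at_iff[OF tri] isogonal_at_iff[OF not_collinear3_rotate(1)[OF tri]] by simp_all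
  moreover have "B - A = b - a" "C - A = c - a" "P - A = p - a" "P' - A = p' - a" "C - B = c - b" "A - B = a - b"
    "P - B = p - b" "P' - B = p' - b" unfolding a_def b_def c_def p_def p'_def by simp_all
  ultimately have isoA: "Im ((b - a) * (c - a) * cnj ((p - a) * (p' - a))) = 0"
    and isoB: "Im ((c - b) * (a - b) * cnj ((p - b) * (p' - b))) = 0" by simp_all
  have "P \<noteq> A" "P \<noteq> B" "P \<noteq> C"
    using off unfolding off_sidelines_def collinear3_def by (auto simp: algebra_simps)
  then have "a \<noteq> b" "b \<noteq> c" "c \<noteq> a" "p \<noteq> a" "p \<noteq> b"
    using not_collinear3_imp_distinct[OF tri] unfolding a_def b_def c_def p_def by auto
  moreover have "cmod b = cmod a" "cmod c = cmod a" "cmod p = cmod a"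
    using circ P unfolding a_def b_def c_def p_def by simp_all
  ultimately have "p = c" using concyclic_isogonal_at_two_vertices[OF refl _ _ _ isoA isoB] by blast
  then show False using \<open>P \<noteq> C\<close> unfolding p_def c_def by simp
qed

lemma isogonal_circumconic_circle_point:
  assumes tri: "\<not> collinear3 A B C"
    and circ: "cmod (B - Oc) = cmod (A - Oc)" "cmod (C - Oc) = cmod (A - Oc)"
    and D: "cmod (D - Oc) = cmod (A - Oc)" "D \<noteq> A" "D \<noteq> B"
    and E: "conic_eval (isogonal_circumconic A B C P P') D = 0"
  shows "isogonal_at C A B D (C + (P' - P))"
proof -
  define x1 x2 x3 where "x1 = line_form B C P" and "x2 = line_form C A P" and "x3 = line_form A B P"
  define y1 y2 y3 where "y1 = line_form B C P'" and "y2 = line_form C A P'" and "y3 = line_form A B P'"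
  define l1 l2 l3 where "l1 = (cmod (C - B))^2" and "l2 = (cmod (A - C))^2" and "l3 = (cmod (B - A))^2"
  define m1 m2 m3 where "m1 = l1 * (line_form C A D * line_form A B D)"
    and "m2 = l2 * (line_form A B D * line_form B C D)" and "m3 = l3 * (line_form B C D * line_form C A D)"
  define K where "K = line_form A B C"
  have "x1 + x2 + x3 = K" "y1 + y2 + y3 = K"
    unfolding x1_def x2_def x3_def y1_def y2_def y3_def K_def by (rule line_form_sum)+
  moreover have "m1 + m2 + m3 = 0"
    using circumcircle_line_form_identity[OF circ D(1)] unfolding m1_def m2_def m3_def l1_def l2_def l3_def .
  moreover have "(x2*y3 - x3*y2)*m1 + (x3*y1 - x1*y3)*m2 + (x1*y2 - x2*y1)*m3 = 0"
    using E unfolding isogonal_circumconic_def conic_eval_circumconic m1_def m2_def m3_def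
      x1_def x2_def x3_def y1_def y2_def y3_def l1_def l2_def l3_def by (simp add: algebra_simps)
  ultimately have "K * ((y1 - x1)*m2 - (y2 - x2)*m1) = 0" by (rule det_zero_sum_parallel)
  moreover have "K \<noteq> 0" unfolding K_def using line_form_nonzero[OF tri] .
  ultimately have "(y1 - x1)*m2 = (y2 - x2)*m1" by (metis eq_iff_diff_eq_0 mult_eq_0_iff)
  then have "line_form A B D * ((y1 - x1) * (l2 * line_form B C D))
      = line_form A B D * ((y2 - x2) * (l1 * line_form C A D))"
    unfolding m1_def m2_def by (simp add: algebra_simps)
  moreover have "line_form A B D \<noteq> 0"
    using concyclic_not_collinear[OF refl D(1) circ(1)] not_collinear3_imp_distinct[OF tri] D(2,3)
    unfolding collinear3_iff_line_form by auto
  ultimately have "(y1 - x1) * (l2 * line_form B C D) = (y2 - x2) * (l1 * line_form C A D)" by simp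
  moreover have "y1 - x1 = - line_form C B (C + (P' - P))" "y2 - x2 = line_form C A (C + (P' - P))"
    unfolding x1_def y1_def x2_def y2_def line_form_def by (simp_all add: algebra_simps)
  ultimately have "line_form C A D * line_form C A (C + (P' - P)) * (cmod (B - C))^2
      = line_form C B D * line_form C B (C + (P' - P)) * (cmod (A - C))^2"
    unfolding l1_def l2_def using line_form_swap[of C B D] norm_minus_commute[of B C] by (simp add: algebra_simps)
  then show ?thesis using isogonal_at_iff_line_forms[OF not_collinear3_rotate(2)[OF tri]] by simp
qed

lemma isogonal_circumconic_meets_circumcircle:
  assumes tri: "\<not> collinear3 A B C"
    and circ: "cmod (B - Oc) = cmod (A - Oc)" "cmod (C - Oc) = cmod (A - Oc)"
    and iso: "isogonal_conjugates A B C P P'" and "P \<noteq> P'"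
    and Q1: "is_the_conic Q1 {A, B, C, P, P'}"
    and D: "cmod (D - Oc) = cmod (A - Oc)" "conic_eval Q1 D = 0" "D \<notin> {A, B, C}"
  shows "of_real ((cmod (A - Oc))^2) * (D - Oc) * (P' - P) = - (A - Oc) * (B - Oc) * (C - Oc) * cnj (P' - P)"
proof -
  obtain k where "isogonal_circumconic A B C P P' = conic_scale k Q1"
    using isogonal_circumconic_through[OF tri iso \<open>P \<noteq> P'\<close>] Q1 unfolding is_the_conic_def by blast
  then have "conic_eval (isogonal_circumconic A B C P P') D = 0" using D(2) by (simp add: conic_eval_scale)
  then have "isogonal_at C A B D (C + (P' - P))"
    using isogonal_circumconic_circle_point[OF tri circ D(1)] D(3) by simp
  then have "Im ((A - C) * (B - C) * cnj ((D - C) * (P' - P))) = 0"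
    using isogonal_at_iff[OF not_collinear3_rotate(2)[OF tri]] by simp
  then have "Im (((A - Oc) - (C - Oc)) * ((B - Oc) - (C - Oc)) * cnj (((D - Oc) - (C - Oc)) * (P' - P))) = 0"
    by simp
  moreover have "A - Oc \<noteq> C - Oc" "B - Oc \<noteq> C - Oc" "D - Oc \<noteq> C - Oc"
    using not_collinear3_imp_distinct[OF tri] D(3) by auto
  ultimately show ?thesis by (rule concyclic_isogonal_direction[OF refl circ D(1)])
qed

lemma isogonal_chord_principal_direction:
  assumes tri: "\<not> collinear3 A B C"
    and circ: "cmod (B - Oc) = cmod (A - Oc)" "cmod (C - Oc) = cmod (A - Oc)"
    and iso: "isogonal_conjugates A B C P P'" and PP': "P \<noteq> P'"
    and Q1: "is_the_conic Q1 {A, B, C, P, P'}"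
    and D: "cmod (D - Oc) = cmod (A - Oc)" "conic_eval Q1 D = 0" "D \<notin> {A, B, C}"
    and D': "cmod (D' - Oc) = cmod (A - Oc)" "collinear3 D D' (D + (P' - P))"
            "D' = D \<longrightarrow> Re ((D - Oc) * cnj (P' - P)) = 0"
    and Q2: "is_the_conic Q2 {A, B, C, D', P}"
  shows "principal_direction Q2 (P' - P)"
proof -
  define r \<kappa> w where "r = cmod (A - Oc)" and "\<kappa> = conic_kappa Q2" and "w = P' - P"
  define a b c d d' where "a = A - Oc" and "b = B - Oc" and "c = C - Oc" and "d = D - Oc" and "d' = D' - Oc"
  have distinct: "A \<noteq> B" "B \<noteq> C" "C \<noteq> A" using not_collinear3_imp_distinct[OF tri] by simp_all
  then have "r \<noteq> 0" using circ(1) unfolding r_def by auto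
  have Dw: "of_real (r^2) * d * w = - a * b * c * cnj w"
    using isogonal_circumconic_meets_circumcircle[OF tri circ iso PP' Q1 D]
    unfolding r_def a_def b_def c_def d_def w_def .
  have chord: "d * d' * cnj w = - of_real (r^2) * w"
    using concyclic_chord_direction[of d r d' w] D(1) D' collinear3_translate[of D Oc D' "D + w"]
    unfolding r_def d_def d'_def w_def by (simp add: diff_add_eq)
  have "D' \<notin> {A, B, C}"
    using is_the_conic_imp_not_vertex[OF tri _ Q2] iso unfolding isogonal_conjugates_def by simp
  moreover have "conic_eval Q2 (Oc + a) = 0" "conic_eval Q2 (Oc + b) = 0" "conic_eval Q2 (Oc + c) = 0"
      "conic_eval Q2 (Oc + d') = 0"
    using Q2 unfolding is_the_conic_def conic_through_def a_def b_def c_def d'_def by simp_all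
  ultimately have \<kappa>: "cnj \<kappa> * of_real (r^4) = \<kappa> * a * b * c * d'"
    using conic_through_four_concyclic[of a r b c d' Q2 Oc] circ D'(1) distinct
    unfolding r_def \<kappa>_def a_def b_def c_def d'_def by auto
  have "(of_real (r^2) :: complex) = (of_real r)^2" "(of_real (r^4) :: complex) = (of_real r)^4" by simp_all
  \<comment> \<open>\<open>cnj \<kappa> r\<^sup>4 (cnj w)\<^sup>2 = \<kappa> (a b c cnj w) (d' cnj w) = \<kappa> (- r\<^sup>2 d w) (d' cnj w) = \<kappa> r\<^sup>4 w\<^sup>2\<close>\<close>
  then have "(of_real r)^4 * (cnj \<kappa> * (cnj w)^2 - \<kappa> * w^2) = 0"
    using Dw chord \<kappa> by algebra
  then have "cnj (\<kappa> * w^2) = \<kappa> * w^2" using \<open>r \<noteq> 0\<close> by simp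
  then have "Im (\<kappa> * w^2) = 0" by (metis Reals_cnj_iff complex_is_Real_iff)
  moreover have "w \<noteq> 0" using PP' unfolding w_def by simp
  ultimately show ?thesis unfolding principal_direction_iff \<kappa>_def w_def by simp
qed

theorem theorem1p3:
  fixes A B C Oc P P' D D' :: complex and Q1 Q2 :: conic
  assumes tri: "\<not> collinear3 A B C"
    and circ: "cmod (B - Oc) = cmod (A - Oc)" "cmod (C - Oc) = cmod (A - Oc)"
    and iso: "isogonal_conjugates A B C P P'" and PP': "P \<noteq> P'"
    and Q1: "is_the_conic Q1 {A, B, C, P, P'}"
    and D: "cmod (D - Oc) = cmod (A - Oc)" "conic_eval Q1 D = 0" "D \<notin> {A, B, C}"
    and D': "cmod (D' - Oc) = cmod (A - Oc)" "collinear3 D D' (D + (P' - P))"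
            "D' = D \<longrightarrow> Re ((D - Oc) * cnj (P' - P)) = 0"
    and Q2: "is_the_conic Q2 {A, B, C, D', P}"
    and Q2_central: "conic_nondegenerate Q2" "conic_central Q2"
  shows "(tangent_line Q2 P P' \<or> line_through_center Q2 P P') \<longleftrightarrow> on_major_or_minor_axis Q2 P"
proof -
  have Q2_zeros: "conic_through Q2 {A, B, C}" "conic_eval Q2 P = 0"
    using Q2 unfolding is_the_conic_def conic_through_def by simp_all
  have "conic_kappa Q2 \<noteq> 0"
  proof
    assume "conic_kappa Q2 = 0"
    then have "cmod (P - Oc) = cmod (A - Oc)" using conic_kappa_eq_0_imp_circle[OF _ tri circ Q2_zeros] by blast
    then show False using isogonal_conjugate_not_on_circumcircle[OF tri circ iso] by simp
  qed
  moreover have "principal_direction Q2 (P' - P)"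
    by (rule isogonal_chord_principal_direction[OF tri circ iso PP' Q1 D D' Q2])
  ultimately show ?thesis using axis_iff_tangent_or_through_center[OF Q2_central(2)] Q2_zeros(2) by blast
qed
end
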